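(* Let $(\Re,\oplus,\circ)$ be a commutative Krasner hyperring with identity $1\neq0$, let $\phi$ be a hyperideal reduction and $\delta$ a hyperideal expansion on $L(\Re)$, and let $N$ be a proper hyperideal of $\Re$. Then the following are equivalent: (i) $N$ is a $\phi$-$\delta$-primary hyperideal; (ii) for each $a\in\Re-\delta(N)$, $(N:a)=N\cup(\phi(N):a)$; (iii) for each $a\in\Re-\delta(N)$, $(N:a)=N$ or $(N:a)=(\phi(N):a)$; (iv) for all hyperideals $K,L$ of $\Re$, $K\circ L\subseteq N$ and $K\circ L\not\subseteq\phi(N)$ imply $K\subseteq N$ or $L\subseteq\delta(N)$; (v) for each hyperideal $M$ of $\Re$ with $M\not\subseteq\delta(N)$, $(N:M)=N$ or $(N:M)=(\phi(N):M)$.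
   Context: A commutative Krasner hyperring with identity is $(\Re,\oplus,\circ)$ where $(\Re,\oplus)$ is a canonical hypergroup (associative commutative hyperoperation, scalar zero $0$ with $a\oplus0=\{a\}$, unique inverses $-a$ with $0\in a\oplus(-a)$, and $c\in a\oplus b\Rightarrow b\in c\oplus(-a),\ a\in c\oplus(-b)$), $(\Re,\circ)$ is a commutative semigroup with identity $1\ne0$ and $a\circ0=0$, and $\circ$ distributes over $\oplus$. Hyperideals: nonempty $N$ with $a\oplus(-b)\subseteq N$, $r\circ a\in N$ for $a,b\in N$, $r\in\Re$; $L(\Re)$ is the set of hyperideals. A hyperideal reduction is a map $\phi:L(\Re)\to L(\Re)\cup\{\emptyset\}$ with $\phi(N)\subseteq N$ and $N\subseteq M\Rightarrow\phi(N)\subseteq\phi(M)$. A hyperideal expansion is a map $\delta:L(\Re)\to L(\Re)$ with $N\subseteq\delta(N)$ and $N\subseteq M\Rightarrow\delta(N)\subseteq\delta(M)$. For $I\in L(\Re)\cup\{\emptyset\}$, $a\in\Re$ and a hyperideal $M$: $(I:a)=\{x: x\circ a\in I\}$, $(I:M)=\{x: x\circ m\in I\ \forall m\in M\}$. $K\circ L$ is the hyperideal generated by $\{k\circ l\}$. A proper hyperideal $N$ is $\phi$-$\delta$-primary if for all $a,b\in\Re$, $a\circ b\in N$ and $a\circ b\notin\phi(N)$ imply $a\in N$ or $b\in\delta(N)$. *)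

theory Defs
  imports Main
begin

definition canonical_hypergroup ::
  "('a \<Rightarrow> 'a \<Rightarrow> 'a set) \<Rightarrow> 'a \<Rightarrow> ('a \<Rightarrow> 'a) \<Rightarrow> bool" where
  "canonical_hypergroup hadd zero neg \<longleftrightarrow>
     (\<forall>a b. hadd a b \<noteq> {}) \<and>
     (\<forall>a b c. (\<Union>x\<in>hadd a b. hadd x c) = (\<Union>y\<in>hadd b c. hadd a y)) \<and>
     (\<forall>a b. hadd a b = hadd b a) \<and>
     (\<forall>a. hadd a zero = {a}) \<and>
     (\<forall>a. zero \<in> hadd a (neg a)) \<and>
     (\<forall>a b. zero \<in> hadd a b \<longrightarrow> b = neg a) \<and>
     (\<forall>a b c. c \<in> hadd a b \<longrightarrow> b \<in> hadd c (neg a) \<and> a \<in> hadd c (neg b))"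

definition krasner_hyperring ::
  "('a \<Rightarrow> 'a \<Rightarrow> 'a set) \<Rightarrow> ('a \<Rightarrow> 'a \<Rightarrow> 'a) \<Rightarrow> 'a \<Rightarrow> 'a \<Rightarrow> ('a \<Rightarrow> 'a) \<Rightarrow> bool" where
  "krasner_hyperring hadd mul zero one neg \<longleftrightarrow>
     canonical_hypergroup hadd zero neg \<and>
     (\<forall>a b c. mul (mul a b) c = mul a (mul b c)) \<and>
     (\<forall>a b. mul a b = mul b a) \<and>
     (\<forall>a. mul a one = a) \<and>
     one \<noteq> zero \<and>
     (\<forall>a. mul a zero = zero) \<and>
     (\<forall>a b c. (\<lambda>x. mul a x) ` hadd b c = hadd (mul a b) (mul a c))"

definition hyperideal ::
  "('a \<Rightarrow> 'a \<Rightarrow> 'a set) \<Rightarrow> ('a \<Rightarrow> 'a \<Rightarrow> 'a) \<Rightarrow> ('a \<Rightarrow> 'a) \<Rightarrow> 'a set \<Rightarrow> bool" where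
  "hyperideal hadd mul neg N \<longleftrightarrow>
     N \<noteq> {} \<and> (\<forall>a\<in>N. \<forall>b\<in>N. hadd a (neg b) \<subseteq> N) \<and> (\<forall>r. \<forall>a\<in>N. mul r a \<in> N)"

definition hgen ::
  "('a \<Rightarrow> 'a \<Rightarrow> 'a set) \<Rightarrow> ('a \<Rightarrow> 'a \<Rightarrow> 'a) \<Rightarrow> ('a \<Rightarrow> 'a) \<Rightarrow> 'a set \<Rightarrow> 'a set" where
  "hgen hadd mul neg S = \<Inter>{I. hyperideal hadd mul neg I \<and> S \<subseteq> I}"

definition hprod ::
  "('a \<Rightarrow> 'a \<Rightarrow> 'a set) \<Rightarrow> ('a \<Rightarrow> 'a \<Rightarrow> 'a) \<Rightarrow> ('a \<Rightarrow> 'a) \<Rightarrow> 'a set \<Rightarrow> 'a set \<Rightarrow> 'a set" where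
  "hprod hadd mul neg K L = hgen hadd mul neg {mul k l | k l. k \<in> K \<and> l \<in> L}"

definition hreduction ::
  "('a \<Rightarrow> 'a \<Rightarrow> 'a set) \<Rightarrow> ('a \<Rightarrow> 'a \<Rightarrow> 'a) \<Rightarrow> ('a \<Rightarrow> 'a) \<Rightarrow> ('a set \<Rightarrow> 'a set) \<Rightarrow> bool" where
  "hreduction hadd mul neg \<phi> \<longleftrightarrow>
     (\<forall>N. hyperideal hadd mul neg N \<longrightarrow>
        (hyperideal hadd mul neg (\<phi> N) \<or> \<phi> N = {}) \<and> \<phi> N \<subseteq> N) \<and>
     (\<forall>N M. hyperideal hadd mul neg N \<longrightarrow> hyperideal hadd mul neg M \<longrightarrow> N \<subseteq> M \<longrightarrow> \<phi> N \<subseteq> \<phi> M)"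

definition hexpansion ::
  "('a \<Rightarrow> 'a \<Rightarrow> 'a set) \<Rightarrow> ('a \<Rightarrow> 'a \<Rightarrow> 'a) \<Rightarrow> ('a \<Rightarrow> 'a) \<Rightarrow> ('a set \<Rightarrow> 'a set) \<Rightarrow> bool" where
  "hexpansion hadd mul neg \<delta> \<longleftrightarrow>
     (\<forall>N. hyperideal hadd mul neg N \<longrightarrow>
        hyperideal hadd mul neg (\<delta> N) \<and> N \<subseteq> \<delta> N) \<and>
     (\<forall>N M. hyperideal hadd mul neg N \<longrightarrow> hyperideal hadd mul neg M \<longrightarrow> N \<subseteq> M \<longrightarrow> \<delta> N \<subseteq> \<delta> M)"

definition colon_elem :: "('a \<Rightarrow> 'a \<Rightarrow> 'a) \<Rightarrow> 'a set \<Rightarrow> 'a \<Rightarrow> 'a set" where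
  "colon_elem mul I a = {x. mul x a \<in> I}"

definition colon_set :: "('a \<Rightarrow> 'a \<Rightarrow> 'a) \<Rightarrow> 'a set \<Rightarrow> 'a set \<Rightarrow> 'a set" where
  "colon_set mul I M = {x. \<forall>m\<in>M. mul x m \<in> I}"

definition phi_delta_primary ::
  "('a \<Rightarrow> 'a \<Rightarrow> 'a set) \<Rightarrow> ('a \<Rightarrow> 'a \<Rightarrow> 'a) \<Rightarrow> ('a \<Rightarrow> 'a) \<Rightarrow>
   ('a set \<Rightarrow> 'a set) \<Rightarrow> ('a set \<Rightarrow> 'a set) \<Rightarrow> 'a set \<Rightarrow> bool" where
  "phi_delta_primary hadd mul neg \<phi> \<delta> N \<longleftrightarrow>
     hyperideal hadd mul neg N \<and> N \<noteq> UNIV \<and>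
     (\<forall>a b. mul a b \<in> N \<and> mul a b \<notin> \<phi> N \<longrightarrow> a \<in> N \<or> b \<in> \<delta> N)"

end

theory Submission
  imports Defs
begin

text \<open>For \<open>a \<notin> \<delta>(N)\<close> a \<open>\<phi>\<close>-\<open>\<delta>\<close>-primary \<open>N\<close> satisfies \<open>(N:a) = N \<union> (\<phi>(N):a)\<close>, and a
  hyperideal that is the union of two hyperideals equals one of them; this gives the dichotomy (iii),
  which conversely implies primality at once. To pass from elements \<open>a\<close> to hyperideals
  \<open>M \<not>\<subseteq> \<delta>(N)\<close>, note that every element of \<open>M \<inter> \<delta>(N)\<close> is a difference of two elements of
  \<open>M - \<delta>(N)\<close>, so a colon condition verified on \<open>M - \<delta>(N)\<close> holds on all of \<open>M\<close>. The
  converse directions specialise (iv) and (v) to principal hyperideals.\<close>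

locale comm_krasner_hyperring =
  fixes hadd :: "'a \<Rightarrow> 'a \<Rightarrow> 'a set" and mul :: "'a \<Rightarrow> 'a \<Rightarrow> 'a"
    and zero one :: 'a and neg :: "'a \<Rightarrow> 'a"
  assumes krasner: "krasner_hyperring hadd mul zero one neg"
begin

lemma canonical: "canonical_hypergroup hadd zero neg"
  using krasner unfolding krasner_hyperring_def by (elim conjE)

lemma hadd_nonempty: "hadd a b \<noteq> {}"
  and hadd_commute: "hadd a b = hadd b a"
  and hadd_zero_right: "hadd a zero = {a}"
  and zero_in_hadd_neg: "zero \<in> hadd a (neg a)"
  and neg_unique: "zero \<in> hadd a b \<Longrightarrow> b = neg a"
  and hadd_reversible: "c \<in> hadd a b \<Longrightarrow> b \<in> hadd c (neg a) \<and> a \<in> hadd c (neg b)"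
  using canonical unfolding canonical_hypergroup_def by simp_all

lemma hadd_zero_left: "hadd zero a = {a}"
  using hadd_commute hadd_zero_right by simp

lemma neg_neg: "neg (neg a) = a"
  using neg_unique[of "neg a" a] zero_in_hadd_neg[of a] hadd_commute by simp

lemma mul_assoc: "mul (mul a b) c = mul a (mul b c)"
  and mul_commute: "mul a b = mul b a"
  and mul_one: "mul a one = a"
  and mul_zero: "mul a zero = zero"
  and mul_hadd: "mul a ` hadd b c = hadd (mul a b) (mul a c)"
  using krasner unfolding krasner_hyperring_def by (metis (no_types))+

lemma mul_left_commute: "mul a (mul b c) = mul b (mul a c)"
  using mul_assoc[of a b c] mul_assoc[of b a c] mul_commute[of a b] by simp

lemma one_mul: "mul one a = a"
  using mul_one mul_commute[of one a] by simp

lemma mul_in_hadd: "z \<in> hadd x y \<Longrightarrow> mul a z \<in> hadd (mul a x) (mul a y)"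
  using mul_hadd by blast

lemma mul_neg: "mul a (neg b) = neg (mul a b)"
  using neg_unique mul_in_hadd[OF zero_in_hadd_neg, of a b] mul_zero[of a] by simp

lemma hyperideal_mul_left: "hyperideal hadd mul neg I \<Longrightarrow> a \<in> I \<Longrightarrow> mul r a \<in> I"
  unfolding hyperideal_def by blast

lemma hyperideal_mul_right: "hyperideal hadd mul neg I \<Longrightarrow> a \<in> I \<Longrightarrow> mul a r \<in> I"
  using hyperideal_mul_left[of I a r] mul_commute[of a r] by simp

lemma hyperideal_zero: "hyperideal hadd mul neg I \<Longrightarrow> zero \<in> I"
  using hyperideal_mul_right[of I _ zero] mul_zero unfolding hyperideal_def by auto

lemma hyperideal_diff:
  "hyperideal hadd mul neg I \<Longrightarrow> a \<in> I \<Longrightarrow> b \<in> I \<Longrightarrow> z \<in> hadd a (neg b) \<Longrightarrow> z \<in> I"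
  unfolding hyperideal_def by blast

lemma hyperideal_neg: "hyperideal hadd mul neg I \<Longrightarrow> a \<in> I \<Longrightarrow> neg a \<in> I"
  using hyperideal_diff[of I zero a "neg a"] hyperideal_zero hadd_zero_left by blast

lemma hyperideal_hadd:
  "hyperideal hadd mul neg I \<Longrightarrow> a \<in> I \<Longrightarrow> b \<in> I \<Longrightarrow> z \<in> hadd a b \<Longrightarrow> z \<in> I"
  using hyperideal_diff[of I a "neg b" z] hyperideal_neg[of I b] neg_neg[of b] by simp

lemma hyperideal_union_imp_subset:
  assumes A: "hyperideal hadd mul neg A" and B: "hyperideal hadd mul neg B"
    and AB: "hyperideal hadd mul neg (A \<union> B)"
  shows "A \<subseteq> B \<or> B \<subseteq> A"
proof (rule ccontr)
  assume "\<not> ?thesis"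
  then obtain x y where x: "x \<in> A" "x \<notin> B" and y: "y \<in> B" "y \<notin> A" by blast
  obtain z where z: "z \<in> hadd x y" using hadd_nonempty by blast
  have "z \<in> A \<union> B" using hyperideal_hadd[OF AB] x y z by blast
  moreover have "z \<notin> A"
    using hyperideal_diff[OF A, of z x y] hadd_reversible[OF z] x y by blast
  moreover have "z \<notin> B"
    using hyperideal_diff[OF B, of z y x] hadd_reversible[OF z] x y by blast
  ultimately show False by blast
qed

lemma hyperideal_colon_elem:
  assumes I: "hyperideal hadd mul neg I"
  shows "hyperideal hadd mul neg (colon_elem mul I a)"
  unfolding hyperideal_def colon_elem_def
proof (intro conjI ballI allI subsetI)
  have "mul zero a \<in> I"
    using hyperideal_zero[OF I] mul_commute[of zero a] mul_zero[of a] by simp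
  then show "{x. mul x a \<in> I} \<noteq> {}" by blast
next
  fix x y z assume "x \<in> {x. mul x a \<in> I}" "y \<in> {x. mul x a \<in> I}"
    and z: "z \<in> hadd x (neg y)"
  then have "mul a x \<in> I" "mul a y \<in> I" by (simp_all add: mul_commute[of a])
  moreover have "mul a z \<in> hadd (mul a x) (neg (mul a y))"
    using mul_in_hadd[OF z, of a] by (simp add: mul_neg)
  ultimately have "mul a z \<in> I" using hyperideal_diff[OF I] by blast
  then show "z \<in> {x. mul x a \<in> I}" by (simp add: mul_commute[of z])
next
  fix r x assume "x \<in> {x. mul x a \<in> I}"
  then show "mul r x \<in> {x. mul x a \<in> I}" by (simp add: mul_assoc hyperideal_mul_left[OF I])
qed

lemma colon_elem_eq_union_imp_either:
  assumes I: "hyperideal hadd mul neg I" and J: "hyperideal hadd mul neg J \<or> J = {}"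
    and eq: "colon_elem mul I a = I \<union> colon_elem mul J a"
  shows "colon_elem mul I a = I \<or> colon_elem mul I a = colon_elem mul J a"
proof (cases "J = {}")
  case True
  then show ?thesis using eq unfolding colon_elem_def by simp
next
  case False
  with J have "hyperideal hadd mul neg (colon_elem mul J a)" by (simp add: hyperideal_colon_elem)
  moreover have "hyperideal hadd mul neg (I \<union> colon_elem mul J a)"
    using hyperideal_colon_elem[OF I, of a] eq by simp
  ultimately have "I \<subseteq> colon_elem mul J a \<or> colon_elem mul J a \<subseteq> I"
    using hyperideal_union_imp_subset[OF I] by blast
  then show ?thesis using eq by blast
qed

definition principal :: "'a \<Rightarrow> 'a set" where
  "principal b = range (\<lambda>r. mul r b)"

lemma self_in_principal: "b \<in> principal b"
  unfolding principal_def using one_mul[of b] by (metis rangeI)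

lemma mul_in_principal: "mul r b \<in> principal b"
  unfolding principal_def by (rule rangeI)

lemma principal_mul_closed: "x \<in> principal b \<Longrightarrow> mul r x \<in> principal b"
  unfolding principal_def by (auto simp flip: mul_assoc)

lemma hyperideal_principal: "hyperideal hadd mul neg (principal b)"
proof -
  have "z \<in> principal b"
    if xy: "x \<in> principal b" "y \<in> principal b" and z: "z \<in> hadd x (neg y)" for x y z
  proof -
    obtain r s where "x = mul b r" "y = mul b s"
      using xy mul_commute[of _ b] unfolding principal_def by auto
    with z have "z \<in> mul b ` hadd r (neg s)" by (simp add: mul_neg mul_hadd)
    then obtain w where "z = mul w b" using mul_commute[of b] by auto
    then show ?thesis by (simp add: mul_in_principal)
  qed
  then show ?thesis
    unfolding hyperideal_def using self_in_principal principal_mul_closed by blast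
qed

lemma colon_set_principal:
  assumes I: "hyperideal hadd mul neg I \<or> I = {}"
  shows "colon_set mul I (principal b) = colon_elem mul I b"
proof
  show "colon_set mul I (principal b) \<subseteq> colon_elem mul I b"
    using self_in_principal unfolding colon_set_def colon_elem_def by blast
next
  show "colon_elem mul I b \<subseteq> colon_set mul I (principal b)"
  proof
    fix x assume "x \<in> colon_elem mul I b"
    then have xb: "mul x b \<in> I" and "hyperideal hadd mul neg I"
      using I unfolding colon_elem_def by auto
    then have "mul x (mul r b) \<in> I" for r
      using hyperideal_mul_left by (simp add: mul_left_commute[of x])
    then show "x \<in> colon_set mul I (principal b)"
      unfolding colon_set_def principal_def by blast
  qed
qed

lemma colon_set_Diff:
  assumes M: "hyperideal hadd mul neg M" and D: "hyperideal hadd mul neg D"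
    and P: "hyperideal hadd mul neg P \<or> P = {}" and MD: "\<not> M \<subseteq> D"
  shows "colon_set mul P (M - D) = colon_set mul P M"
proof
  show "colon_set mul P (M - D) \<subseteq> colon_set mul P M"
  proof
    fix y assume y: "y \<in> colon_set mul P (M - D)"
    obtain b where b: "b \<in> M" "b \<notin> D" using MD by blast
    have "mul y m \<in> P" if m: "m \<in> M" "m \<in> D" for m
    proof -
      have yb: "mul y b \<in> P" using y b unfolding colon_set_def by blast
      with P have P': "hyperideal hadd mul neg P" by blast
      obtain z where z: "z \<in> hadd m b" using hadd_nonempty by blast
      have "z \<in> M" using hyperideal_hadd[OF M] z m b by blast
      moreover have "z \<notin> D" using hyperideal_diff[OF D] hadd_reversible[OF z] m b by blast
      ultimately have yz: "mul y z \<in> P" using y unfolding colon_set_def by blast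
      have "mul y m \<in> hadd (mul y z) (neg (mul y b))"
        using mul_in_hadd[of m z "neg b" y] hadd_reversible[OF z] by (simp add: mul_neg)
      then show ?thesis using hyperideal_diff[OF P'] yz yb by blast
    qed
    then show "y \<in> colon_set mul P M" using y unfolding colon_set_def by blast
  qed
qed (auto simp: colon_set_def)

lemma products_subset_hprod: "{mul k l | k l. k \<in> K \<and> l \<in> L} \<subseteq> hprod hadd mul neg K L"
  unfolding hprod_def hgen_def by blast

lemma hprod_subset_iff:
  assumes "hyperideal hadd mul neg I"
  shows "hprod hadd mul neg K L \<subseteq> I \<longleftrightarrow> (\<forall>k\<in>K. \<forall>l\<in>L. mul k l \<in> I)"
  using assms products_subset_hprod[of K L] unfolding hprod_def hgen_def by blast

end

locale phi_delta_hyperideal = comm_krasner_hyperring +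
  fixes \<phi> \<delta> :: "'a set \<Rightarrow> 'a set" and N :: "'a set"
  assumes N: "hyperideal hadd mul neg N" and N_proper: "N \<noteq> UNIV"
    and phi_N: "hyperideal hadd mul neg (\<phi> N) \<or> \<phi> N = {}" and phi_N_subset: "\<phi> N \<subseteq> N"
    and delta_N: "hyperideal hadd mul neg (\<delta> N)"
begin

lemma primary_imp_colon_elem_eq_union:
  assumes "phi_delta_primary hadd mul neg \<phi> \<delta> N" and "a \<notin> \<delta> N"
  shows "colon_elem mul N a = N \<union> colon_elem mul (\<phi> N) a"
proof
  show "colon_elem mul N a \<subseteq> N \<union> colon_elem mul (\<phi> N) a"
    using assms unfolding phi_delta_primary_def colon_elem_def by blast
  show "N \<union> colon_elem mul (\<phi> N) a \<subseteq> colon_elem mul N a"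
    using phi_N_subset hyperideal_mul_right[OF N] unfolding colon_elem_def by blast
qed

lemma primary_imp_colon_elem_eq_either:
  assumes "phi_delta_primary hadd mul neg \<phi> \<delta> N" and "a \<notin> \<delta> N"
  shows "colon_elem mul N a = N \<or> colon_elem mul N a = colon_elem mul (\<phi> N) a"
  using colon_elem_eq_union_imp_either[OF N phi_N primary_imp_colon_elem_eq_union[OF assms]] .

lemma colon_elem_eq_either_imp_primary:
  assumes "\<forall>a. a \<notin> \<delta> N \<longrightarrow>
    colon_elem mul N a = N \<or> colon_elem mul N a = colon_elem mul (\<phi> N) a"
  shows "phi_delta_primary hadd mul neg \<phi> \<delta> N"
  unfolding phi_delta_primary_def
proof (intro conjI allI impI N N_proper)
  fix a b assume "mul a b \<in> N \<and> mul a b \<notin> \<phi> N"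
  then have "a \<in> colon_elem mul N b" "a \<notin> colon_elem mul (\<phi> N) b"
    unfolding colon_elem_def by auto
  then show "a \<in> N \<or> b \<in> \<delta> N" using assms by blast
qed

lemma primary_colon_set_subset:
  assumes primary: "phi_delta_primary hadd mul neg \<phi> \<delta> N"
    and M: "hyperideal hadd mul neg M" and MD: "\<not> M \<subseteq> \<delta> N"
    and x: "x \<in> colon_set mul N M" "x \<notin> N"
  shows "colon_set mul N M \<subseteq> colon_set mul (\<phi> N) M"
proof
  fix y assume y: "y \<in> colon_set mul N M"
  have "y \<in> colon_set mul (\<phi> N) (M - \<delta> N)"
    unfolding colon_set_def
  proof (intro CollectI ballI)
    fix m assume m: "m \<in> M - \<delta> N"
    then have "x \<in> colon_elem mul N m" "y \<in> colon_elem mul N m"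
      using x y unfolding colon_set_def colon_elem_def by auto
    then have "y \<in> colon_elem mul (\<phi> N) m"
      using primary_imp_colon_elem_eq_either[OF primary, of m] m x by blast
    then show "mul y m \<in> \<phi> N" unfolding colon_elem_def by blast
  qed
  then show "y \<in> colon_set mul (\<phi> N) M" using colon_set_Diff[OF M delta_N phi_N MD] by simp
qed

lemma primary_imp_colon_set_eq_either:
  assumes "phi_delta_primary hadd mul neg \<phi> \<delta> N"
    and "hyperideal hadd mul neg M" and "\<not> M \<subseteq> \<delta> N"
  shows "colon_set mul N M = N \<or> colon_set mul N M = colon_set mul (\<phi> N) M"
proof (cases "colon_set mul N M \<subseteq> N")
  case True
  moreover have "N \<subseteq> colon_set mul N M"
    using hyperideal_mul_right[OF N] unfolding colon_set_def by blast
  ultimately show ?thesis by blast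
next
  case False
  then obtain x where "x \<in> colon_set mul N M" "x \<notin> N" by blast
  then have "colon_set mul N M \<subseteq> colon_set mul (\<phi> N) M"
    by (rule primary_colon_set_subset[OF assms])
  moreover have "colon_set mul (\<phi> N) M \<subseteq> colon_set mul N M"
    using phi_N_subset unfolding colon_set_def by blast
  ultimately show ?thesis by blast
qed

lemma colon_set_eq_either_imp_colon_elem_eq_either:
  assumes "\<forall>M. hyperideal hadd mul neg M \<longrightarrow> \<not> M \<subseteq> \<delta> N \<longrightarrow>
      colon_set mul N M = N \<or> colon_set mul N M = colon_set mul (\<phi> N) M"
    and "a \<notin> \<delta> N"
  shows "colon_elem mul N a = N \<or> colon_elem mul N a = colon_elem mul (\<phi> N) a"
proof -
  have "\<not> principal a \<subseteq> \<delta> N" using assms(2) self_in_principal by blast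
  then have "colon_set mul N (principal a) = N \<or>
      colon_set mul N (principal a) = colon_set mul (\<phi> N) (principal a)"
    using assms(1) hyperideal_principal by blast
  then show ?thesis using colon_set_principal[OF phi_N] colon_set_principal[of N] N by simp
qed

lemma primary_imp_hprod:
  assumes primary: "phi_delta_primary hadd mul neg \<phi> \<delta> N"
    and K: "hyperideal hadd mul neg K" and L: "hyperideal hadd mul neg L"
    and KL_N: "hprod hadd mul neg K L \<subseteq> N" and KL_phi: "\<not> hprod hadd mul neg K L \<subseteq> \<phi> N"
  shows "K \<subseteq> N \<or> L \<subseteq> \<delta> N"
proof (rule ccontr)
  assume "\<not> ?thesis"
  then obtain x where x: "x \<in> K" "x \<notin> N" and LD: "\<not> L \<subseteq> \<delta> N" by blast
  have "K \<subseteq> colon_set mul N L"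
    using KL_N hprod_subset_iff[OF N] unfolding colon_set_def by blast
  then have "K \<subseteq> colon_set mul (\<phi> N) L"
    using primary_colon_set_subset[OF primary L LD] x by blast
  then have products: "\<forall>k\<in>K. \<forall>l\<in>L. mul k l \<in> \<phi> N" unfolding colon_set_def by blast
  moreover have "\<phi> N \<noteq> {}" using products K L unfolding hyperideal_def by blast
  ultimately have "hprod hadd mul neg K L \<subseteq> \<phi> N" using phi_N hprod_subset_iff by blast
  with KL_phi show False by contradiction
qed

lemma hprod_imp_primary:
  assumes "\<forall>K L. hyperideal hadd mul neg K \<longrightarrow> hyperideal hadd mul neg L \<longrightarrow>
      hprod hadd mul neg K L \<subseteq> N \<longrightarrow> \<not> hprod hadd mul neg K L \<subseteq> \<phi> N \<longrightarrow>
      K \<subseteq> N \<or> L \<subseteq> \<delta> N"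
  shows "phi_delta_primary hadd mul neg \<phi> \<delta> N"
  unfolding phi_delta_primary_def
proof (intro conjI allI impI N N_proper)
  fix a b assume ab: "mul a b \<in> N \<and> mul a b \<notin> \<phi> N"
  have "mul (mul r a) (mul s b) \<in> N" for r s
    using ab by (simp add: mul_assoc mul_left_commute[of a] hyperideal_mul_left[OF N])
  then have "hprod hadd mul neg (principal a) (principal b) \<subseteq> N"
    using hprod_subset_iff[OF N] unfolding principal_def by auto
  moreover have "mul a b \<in> hprod hadd mul neg (principal a) (principal b)"
    using products_subset_hprod self_in_principal by blast
  ultimately have "principal a \<subseteq> N \<or> principal b \<subseteq> \<delta> N"
    using assms hyperideal_principal ab by blast
  then show "a \<in> N \<or> b \<in> \<delta> N" using self_in_principal by blast
qed

end

theorem mainTheorem3: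
  fixes hadd :: "'a \<Rightarrow> 'a \<Rightarrow> 'a set" and mul :: "'a \<Rightarrow> 'a \<Rightarrow> 'a"
    and zero one :: 'a and neg :: "'a \<Rightarrow> 'a"
    and \<phi> \<delta> :: "'a set \<Rightarrow> 'a set" and N :: "'a set"
  assumes "krasner_hyperring hadd mul zero one neg"
    and "hreduction hadd mul neg \<phi>"
    and "hexpansion hadd mul neg \<delta>"
    and "hyperideal hadd mul neg N" and "N \<noteq> UNIV"
  shows "(phi_delta_primary hadd mul neg \<phi> \<delta> N \<longleftrightarrow>
            (\<forall>a. a \<notin> \<delta> N \<longrightarrow> colon_elem mul N a = N \<union> colon_elem mul (\<phi> N) a))
       \<and> (phi_delta_primary hadd mul neg \<phi> \<delta> N \<longleftrightarrow>
            (\<forall>a. a \<notin> \<delta> N \<longrightarrow> colon_elem mul N a = N \<or> colon_elem mul N a = colon_elem mul (\<phi> N) a))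
       \<and> (phi_delta_primary hadd mul neg \<phi> \<delta> N \<longleftrightarrow>
            (\<forall>K L. hyperideal hadd mul neg K \<longrightarrow> hyperideal hadd mul neg L \<longrightarrow>
               hprod hadd mul neg K L \<subseteq> N \<longrightarrow> \<not> hprod hadd mul neg K L \<subseteq> \<phi> N \<longrightarrow>
               K \<subseteq> N \<or> L \<subseteq> \<delta> N))
       \<and> (phi_delta_primary hadd mul neg \<phi> \<delta> N \<longleftrightarrow>
            (\<forall>M. hyperideal hadd mul neg M \<longrightarrow> \<not> M \<subseteq> \<delta> N \<longrightarrow>
               colon_set mul N M = N \<or> colon_set mul N M = colon_set mul (\<phi> N) M))"
proof -
  interpret phi_delta_hyperideal hadd mul zero one neg \<phi> \<delta> N
  proof
    show "hyperideal hadd mul neg (\<phi> N) \<or> \<phi> N = {}" "\<phi> N \<subseteq> N"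
      using assms(2,4) unfolding hreduction_def by blast+
    show "hyperideal hadd mul neg (\<delta> N)"
      using assms(3,4) unfolding hexpansion_def by blast
  qed (fact assms)+
  show ?thesis
  proof (intro conjI iffI allI impI)
    show "phi_delta_primary hadd mul neg \<phi> \<delta> N"
      if "\<forall>a. a \<notin> \<delta> N \<longrightarrow> colon_elem mul N a = N \<union> colon_elem mul (\<phi> N) a"
      using that colon_elem_eq_union_imp_either[OF N phi_N] colon_elem_eq_either_imp_primary
      by blast
    show "phi_delta_primary hadd mul neg \<phi> \<delta> N"
      if "\<forall>M. hyperideal hadd mul neg M \<longrightarrow> \<not> M \<subseteq> \<delta> N \<longrightarrow>
        colon_set mul N M = N \<or> colon_set mul N M = colon_set mul (\<phi> N) M"
      using that colon_set_eq_either_imp_colon_elem_eq_either colon_elem_eq_either_imp_primary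
      by blast
  qed (rule primary_imp_colon_elem_eq_union primary_imp_colon_elem_eq_either
      colon_elem_eq_either_imp_primary primary_imp_hprod hprod_imp_primary
      primary_imp_colon_set_eq_either; assumption)+
qed

end
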